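(* Let $d\in[0,1]$ and $\tau\in\mathbb N$ be such that $d\cdot\frac{\tau+1}{2^\tau}\le1/2$. Then the capacity of $\mathrm{BDC\text{-}Thr}(\tau,d)$ is at least $1-h\!\left(d\cdot\frac{\tau+1}{2^\tau}\right)$.
   Context: $\mathrm{BDC\text{-}Thr}(\tau,d)$ is the binary channel that acts on each maximal run of length $\ell$ of the input as follows: if $\ell<\tau$ the run is left unchanged; if $\ell\ge\tau$ each bit of the run is deleted independently with probability $d$. $h(p)=-p\log_2p-(1-p)\log_2(1-p)$ is the binary entropy function. Capacity means the supremum of achievable rates (rates of codes with decoding error probability tending to $0$ as the block length grows). *)

theory Defs
  imports "HOL-Probability.Probability"
begin

fun runs :: "bool list \<Rightarrow> (bool \<times> nat) list" where
  "runs [] = []"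
| "runs (x # xs) =
     (case runs xs of
        [] \<Rightarrow> [(x, 1)]
      | (b, l) # rs \<Rightarrow> (if b = x then (b, Suc l) # rs else (x, 1) # (b, l) # rs))"

text \<open>Action of the channel on a list of runs: a run of length l < tau is kept,
  otherwise each of its l bits survives independently with probability 1 - d,
  so the number of surviving bits is Binomial(l, 1 - d).\<close>
fun thr_runs :: "nat \<Rightarrow> real \<Rightarrow> (bool \<times> nat) list \<Rightarrow> bool list pmf" where
  "thr_runs \<tau> d [] = return_pmf []"
| "thr_runs \<tau> d ((b, l) # rs) =
     bind_pmf (if l < \<tau> then return_pmf l else binomial_pmf l (1 - d)) (\<lambda>k.
     bind_pmf (thr_runs \<tau> d rs) (\<lambda>ys.
     return_pmf (replicate k b @ ys)))"

definition bdc_thr :: "nat \<Rightarrow> real \<Rightarrow> bool list \<Rightarrow> bool list pmf" where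
  "bdc_thr \<tau> d x = thr_runs \<tau> d (runs x)"

text \<open>Binary entropy (with 0 log 0 = 0; in Isabelle ln 0 = 0).\<close>
definition bin_entropy :: "real \<Rightarrow> real" where
  "bin_entropy p = - p * log 2 p - (1 - p) * log 2 (1 - p)"

definition dec_error :: "(bool list \<Rightarrow> bool list pmf) \<Rightarrow> (nat \<Rightarrow> bool list) \<Rightarrow>
    (bool list \<Rightarrow> nat) \<Rightarrow> nat \<Rightarrow> real" where
  "dec_error W enc dec i = measure_pmf.prob (W (enc i)) {y. dec y \<noteq> i}"

definition achievable :: "(bool list \<Rightarrow> bool list pmf) \<Rightarrow> real \<Rightarrow> bool" where
  "achievable W R \<longleftrightarrow>
     (\<exists>(M :: nat \<Rightarrow> nat) (enc :: nat \<Rightarrow> nat \<Rightarrow> bool list) (dec :: nat \<Rightarrow> bool list \<Rightarrow> nat)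
        (\<epsilon> :: nat \<Rightarrow> real).
        (\<forall>n i. i < M n \<longrightarrow> length (enc n i) = n) \<and>
        (\<forall>n i. i < M n \<longrightarrow> dec_error W (enc n) (dec n) i \<le> \<epsilon> n) \<and>
        \<epsilon> \<longlonglongrightarrow> 0 \<and>
        (\<forall>\<^sub>F n in sequentially. 2 powr (R * real n) \<le> real (M n)))"

definition capacity :: "(bool list \<Rightarrow> bool list pmf) \<Rightarrow> ereal" where
  "capacity W = Sup (ereal ` {R. achievable W R})"

end

theory Submission
  imports Defs "HOL-Library.Sublist" "HOL-Real_Asymp.Real_Asymp"
begin

text \<open>
  A run shorter than \<tau> passes the channel unchanged, so an input x loses only
  Binomial(L, d) bits, where L is the number of bits of x lying in runs of length at
  least \<tau>. A potential-function argument shows that L averages at most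
  (n + 1)(\<tau> + 1)/2^\<tau> over the words of length n; hence for every \<theta> above
  (\<tau> + 1)/2^\<tau> a constant fraction of all words have L \<le> \<theta>n, and if d\<theta> < \<delta>,
  Hoeffding's inequality makes the output of such a word shorter than (1 - \<delta>)n only
  with exponentially small probability.

  The output is always a subsequence of the input. Decoding to the first codeword
  containing the output as a subsequence therefore fails only if a long output is
  also a subsequence of another codeword, and a word of length at least (1 - \<delta>)n
  has at most 2^(n h(\<delta>)) supersequences of length n. So the resulting confusion
  matrix on the good words has row sums at most 2^(n h(\<delta>)), and expurgation
  yields codes of every rate below 1 - h(\<delta>) with vanishing maximal error.
  Letting \<delta> decrease to d(\<tau> + 1)/2^\<tau> gives the bound.
\<close>

section \<open>Sparse subsets of a nonnegative matrix\<close>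

lemma card_gt_mult_le_sum:
  fixes g :: "'a \<Rightarrow> real"
  assumes "finite A" and "\<And>a. a \<in> A \<Longrightarrow> 0 \<le> g a"
  shows "real (card {a \<in> A. c < g a}) * c \<le> (\<Sum>a\<in>A. g a)"
proof -
  have "real (card {a \<in> A. c < g a}) * c = (\<Sum>a\<in>{a \<in> A. c < g a}. c)" by simp
  also have "\<dots> \<le> (\<Sum>a\<in>{a \<in> A. c < g a}. g a)" by (intro sum_mono) simp
  also have "\<dots> \<le> (\<Sum>a\<in>A. g a)" using assms by (intro sum_mono2) auto
  finally show ?thesis .
qed

lemma card_expurgated:
  fixes g :: "'a \<Rightarrow> real"
  assumes C: "finite C" and g: "\<And>a. a \<in> C \<Longrightarrow> 0 \<le> g a" and B: "(\<Sum>a\<in>C. g a) \<le> B"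
  shows "card C \<le> 2 * card {a \<in> C. g a \<le> 2 * B / card C}"
proof -
  define D where "D = {a \<in> C. 2 * B / card C < g a}"
  have "2 * card D \<le> card C"
  proof (cases "D = {}")
    case False
    then have "C \<noteq> {}" by (auto simp: D_def)
    then have C0: "0 < real (card C)" using C by (simp add: card_gt_0_iff)
    have gB: "g a \<le> B" if "a \<in> C" for a
    proof -
      have "g a \<le> (\<Sum>a\<in>C. g a)" using that C g by (intro member_le_sum) auto
      then show ?thesis using B by linarith
    qed
    obtain a where a: "a \<in> C" "2 * B / card C < g a" using False by (auto simp: D_def)
    then have "0 \<le> B" using g gB by (meson order_trans)
    then have "0 < B" using a gB[OF a(1)] by (cases "B = 0") auto
    have "real (card D) * (2 * B / card C) \<le> (\<Sum>a\<in>C. g a)"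
      unfolding D_def using C g by (rule card_gt_mult_le_sum)
    then have "real (card D) * (2 * B / card C) \<le> B" using B by linarith
    then show ?thesis using \<open>0 < B\<close> C0 by (simp add: field_simps)
  qed simp
  moreover have "card {a \<in> C. g a \<le> 2 * B / card C} + card D = card C"
    unfolding D_def using C
    by (subst card_Un_disjoint[symmetric]) (auto intro: arg_cong[where f = card])
  ultimately show ?thesis by linarith
qed

lemma exists_le_mean:
  fixes f :: "'a \<Rightarrow> real"
  assumes "finite A" and "A \<noteq> {}"
  shows "\<exists>b\<in>A. f b \<le> (\<Sum>a\<in>A. f a) / card A"
proof (rule ccontr)
  assume "\<not> ?thesis"
  then have "(\<Sum>b\<in>A. (\<Sum>a\<in>A. f a) / card A) < (\<Sum>b\<in>A. f b)"
    using assms by (intro sum_strict_mono) auto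
  then show False using assms by simp
qed

lemma exists_small_cross_weight:
  fixes u :: "'a \<Rightarrow> 'a \<Rightarrow> real" and \<Delta> :: real
  assumes V: "finite V" and u: "\<And>a b. 0 \<le> u a b"
    and row: "\<And>a. a \<in> V \<Longrightarrow> (\<Sum>b\<in>V. u a b) \<le> \<Delta>"
    and col: "\<And>b. b \<in> V \<Longrightarrow> (\<Sum>a\<in>V. u a b) \<le> \<Delta>"
    and C: "C \<subseteq> V" "2 * card C < card V"
  shows "\<exists>b\<in>V - C. (\<Sum>a\<in>C. u a b + u b a) \<le> 4 * card C * \<Delta> / card V"
proof -
  define k N where "k = card C" and "N = card V"
  define f where "f b = (\<Sum>a\<in>C. u a b + u b a)" for b
  have "V \<noteq> {}" using C by auto
  then obtain a where "a \<in> V" by blast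
  have "0 \<le> (\<Sum>b\<in>V. u a b)" using u by (simp add: sum_nonneg)
  then have \<Delta>: "0 \<le> \<Delta>" using row[OF \<open>a \<in> V\<close>] by linarith
  have VC: "card (V - C) = N - k"
    using C V by (simp add: card_Diff_subset finite_subset k_def N_def)
  have "(\<Sum>b\<in>V - C. f b) \<le> (\<Sum>b\<in>V. f b)"
    using V u by (intro sum_mono2) (auto simp: f_def intro!: sum_nonneg add_nonneg_nonneg)
  also have "\<dots> = (\<Sum>b\<in>V. \<Sum>a\<in>C. u a b) + (\<Sum>b\<in>V. \<Sum>a\<in>C. u b a)"
    by (simp only: f_def sum.distrib)
  also have "\<dots> = (\<Sum>a\<in>C. \<Sum>b\<in>V. u a b) + (\<Sum>a\<in>C. \<Sum>b\<in>V. u b a)"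
    by (simp only: sum.swap[of _ V C])
  also have "\<dots> = (\<Sum>a\<in>C. (\<Sum>b\<in>V. u a b) + (\<Sum>b\<in>V. u b a))"
    by (rule sum.distrib[symmetric])
  also have "\<dots> \<le> (\<Sum>a\<in>C. \<Delta> + \<Delta>)"
    using C by (intro sum_mono add_mono row col) auto
  finally have total: "(\<Sum>b\<in>V - C. f b) \<le> 2 * k * \<Delta>" by (simp add: k_def)
  have "0 < card (V - C)" using VC C by (simp add: k_def N_def)
  then have "V - C \<noteq> {}" by (metis card.empty less_irrefl)
  then obtain b where b: "b \<in> V - C" and fb: "f b \<le> (\<Sum>b\<in>V - C. f b) / card (V - C)"
    using exists_le_mean[of "V - C" f] V by blast
  have "(\<Sum>b\<in>V - C. f b) / card (V - C) \<le> 2 * k * \<Delta> / (N - k)"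
    using total VC by (simp add: divide_right_mono)
  also have "\<dots> = 4 * k * \<Delta> / (2 * (N - k))" by simp
  also have "\<dots> \<le> 4 * k * \<Delta> / N"
    using C \<Delta> by (intro divide_left_mono) (auto simp: k_def N_def)
  finally have "f b \<le> 4 * k * \<Delta> / N" using fb by linarith
  then show ?thesis using b unfolding f_def k_def N_def by blast
qed

lemma sum_off_diagonal_insert:
  fixes u :: "'a \<Rightarrow> 'a \<Rightarrow> real"
  assumes "finite C" and "b \<notin> C"
  shows "(\<Sum>a\<in>insert b C. \<Sum>c\<in>insert b C - {a}. u a c) =
    (\<Sum>a\<in>C. \<Sum>c\<in>C - {a}. u a c) + (\<Sum>a\<in>C. u a b + u b a)"
proof -
  have "insert b C - {a} = insert b (C - {a})" if "a \<in> C" for a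
    using that assms by auto
  then have "(\<Sum>a\<in>C. \<Sum>c\<in>insert b C - {a}. u a c) = (\<Sum>a\<in>C. u a b + (\<Sum>c\<in>C - {a}. u a c))"
    using assms by (intro sum.cong) auto
  moreover have "insert b C - {b} = C" using assms by auto
  ultimately show ?thesis using assms by (simp add: sum.distrib)
qed

lemma exists_subset_small_off_diagonal_sum:
  fixes u :: "'a \<Rightarrow> 'a \<Rightarrow> real" and \<Delta> :: real
  assumes V: "finite V" and u: "\<And>a b. 0 \<le> u a b"
    and row: "\<And>a. a \<in> V \<Longrightarrow> (\<Sum>b\<in>V. u a b) \<le> \<Delta>"
    and col: "\<And>b. b \<in> V \<Longrightarrow> (\<Sum>a\<in>V. u a b) \<le> \<Delta>"
  shows "2 * k \<le> card V \<Longrightarrow>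
    \<exists>C\<subseteq>V. card C = k \<and> (\<Sum>a\<in>C. \<Sum>b\<in>C - {a}. u a b) \<le> 4 * k\<^sup>2 * \<Delta> / card V"
proof (induction k)
  case 0
  show ?case by (intro exI[of _ "{}"]) simp
next
  case (Suc k)
  then obtain C where C: "C \<subseteq> V" "card C = k"
    and sum_C: "(\<Sum>a\<in>C. \<Sum>b\<in>C - {a}. u a b) \<le> 4 * k\<^sup>2 * \<Delta> / card V"
    by auto
  obtain b where b: "b \<in> V - C" and cross: "(\<Sum>a\<in>C. u a b + u b a) \<le> 4 * k * \<Delta> / card V"
    using exists_small_cross_weight[OF V u row col C(1)] C(2) Suc.prems by auto
  have "finite C" using C V finite_subset by blast
  obtain a where "a \<in> V" using b by blast
  have "0 \<le> (\<Sum>c\<in>V. u a c)" using u by (simp add: sum_nonneg)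
  then have "0 \<le> \<Delta>" using row[OF \<open>a \<in> V\<close>] by linarith
  have "(\<Sum>a\<in>insert b C. \<Sum>c\<in>insert b C - {a}. u a c) \<le> (4 * k\<^sup>2 * \<Delta> + 4 * k * \<Delta>) / card V"
    using sum_off_diagonal_insert[OF \<open>finite C\<close>, of b u] b sum_C cross
    by (simp add: add_divide_distrib)
  also have "\<dots> \<le> 4 * (Suc k)\<^sup>2 * \<Delta> / card V"
    using \<open>0 \<le> \<Delta>\<close> by (intro divide_right_mono) (simp_all add: power2_eq_square algebra_simps)
  finally show ?case
    using b C \<open>finite C\<close> by (intro exI[of _ "insert b C"]) auto
qed

lemma exists_subset_small_row_sums_of_col_bound:
  fixes u :: "'a \<Rightarrow> 'a \<Rightarrow> real" and \<Delta> :: real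
  assumes V: "finite V" and u: "\<And>a b. 0 \<le> u a b"
    and row: "\<And>a. a \<in> V \<Longrightarrow> (\<Sum>b\<in>V. u a b) \<le> \<Delta>"
    and col: "\<And>b. b \<in> V \<Longrightarrow> (\<Sum>a\<in>V. u a b) \<le> \<Delta>"
    and k: "4 * k \<le> card V"
  shows "\<exists>C\<subseteq>V. card C = k \<and> (\<forall>a\<in>C. (\<Sum>b\<in>C - {a}. u a b) \<le> 16 * k * \<Delta> / card V)"
proof (cases "k = 0")
  case True
  then show ?thesis by (intro exI[of _ "{}"]) simp
next
  case False
  define B where "B = 4 * (2 * k)\<^sup>2 * \<Delta> / card V"
  obtain C0 where C0: "C0 \<subseteq> V" "card C0 = 2 * k"
    and sum_C0: "(\<Sum>a\<in>C0. \<Sum>b\<in>C0 - {a}. u a b) \<le> B"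
    using exists_subset_small_off_diagonal_sum[OF V u row col, of "2 * k"] k by (auto simp: B_def)
  have "finite C0" using C0 V finite_subset by blast
  define C1 where "C1 = {a \<in> C0. (\<Sum>b\<in>C0 - {a}. u a b) \<le> 2 * B / card C0}"
  have "card C0 \<le> 2 * card C1"
    unfolding C1_def by (rule card_expurgated[OF \<open>finite C0\<close> _ sum_C0]) (simp add: u sum_nonneg)
  then obtain C where C: "C \<subseteq> C1" "card C = k"
    using C0(2) obtain_subset_with_card_n[of k C1] by auto
  have "2 * B / card C0 = 16 * k * \<Delta> / card V"
    using C0(2) False by (simp add: B_def power2_eq_square)
  moreover have "(\<Sum>b\<in>C - {a}. u a b) \<le> (\<Sum>b\<in>C0 - {a}. u a b)" if "a \<in> C" for a
    using C \<open>finite C0\<close> u by (intro sum_mono2) (auto simp: C1_def)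
  ultimately have "\<forall>a\<in>C. (\<Sum>b\<in>C - {a}. u a b) \<le> 16 * k * \<Delta> / card V"
    using C by (force simp: C1_def)
  then show ?thesis using C C0 by (intro exI[of _ C]) (auto simp: C1_def)
qed

lemma exists_subset_small_row_sums:
  fixes u :: "'a \<Rightarrow> 'a \<Rightarrow> real" and S :: real
  assumes T: "finite T" and u: "\<And>a b. 0 \<le> u a b" and S: "0 \<le> S"
    and row: "\<And>a. a \<in> T \<Longrightarrow> (\<Sum>b\<in>T. u a b) \<le> S"
    and k: "8 * k \<le> card T"
  shows "\<exists>C\<subseteq>T. card C = k \<and> (\<forall>a\<in>C. (\<Sum>b\<in>C - {a}. u a b) \<le> 64 * k * S / card T)"
proof -
  define col where "col b = (\<Sum>a\<in>T. u a b)" for b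
  define V where "V = {b \<in> T. col b \<le> 2 * S}"
  have V: "finite V" "V \<subseteq> T" using T by (auto simp: V_def)
  have "(\<Sum>b\<in>T. col b) \<le> card T * S"
    unfolding col_def using row by (subst sum.swap) (simp add: sum_bounded_above)
  then have "card T \<le> 2 * card {b \<in> T. col b \<le> 2 * (card T * S) / card T}"
    by (intro card_expurgated T) (simp add: col_def u sum_nonneg)
  moreover have "2 * (card T * S) / card T \<le> 2 * S" using S by (cases "card T = 0") auto
  then have "{b \<in> T. col b \<le> 2 * (card T * S) / card T} \<subseteq> V" by (auto simp: V_def)
  ultimately have TV: "card T \<le> 2 * card V"
    using card_mono[OF V(1)] by (meson le_trans mult_le_mono2)
  have row_V: "(\<Sum>b\<in>V. u a b) \<le> 2 * S" if "a \<in> V" for a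
  proof -
    have "(\<Sum>b\<in>V. u a b) \<le> (\<Sum>b\<in>T. u a b)" using V T u by (intro sum_mono2) auto
    then show ?thesis using row[of a] that V S by auto
  qed
  have col_V: "(\<Sum>a\<in>V. u a b) \<le> 2 * S" if "b \<in> V" for b
  proof -
    have "(\<Sum>a\<in>V. u a b) \<le> col b" unfolding col_def using V T u by (intro sum_mono2) auto
    then show ?thesis using that by (simp add: V_def)
  qed
  have "4 * k \<le> card V" using k TV by linarith
  then obtain C where C: "C \<subseteq> V" "card C = k"
    and sparse: "\<forall>a\<in>C. (\<Sum>b\<in>C - {a}. u a b) \<le> 16 * real k * (2 * S) / card V"
    using exists_subset_small_row_sums_of_col_bound[OF V(1) u row_V col_V] by blast
  have "16 * real k * (2 * S) / card V \<le> 64 * k * S / card T"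
  proof (cases "card V = 0")
    case False
    then have "0 < card T" using V T card_mono[of T V] by linarith
    have "16 * real k * (2 * S) / card V = 64 * k * S / (2 * card V)" by simp
    also have "\<dots> \<le> 64 * k * S / card T"
      using TV S \<open>0 < card T\<close> False by (intro divide_left_mono) auto
    finally show ?thesis .
  qed (simp add: S)
  then show ?thesis using C V sparse by (intro exI[of _ C]) force
qed

section \<open>Binomial distribution and binary entropy\<close>

lemma binomial_pmf_add:
  assumes "p \<in> {0..1}"
  shows "binomial_pmf (m + n) p =
    bind_pmf (binomial_pmf m p) (\<lambda>i. map_pmf ((+) i) (binomial_pmf n p))"
proof (induction m)
  case 0
  then show ?case
    using assms by (simp add: binomial_pmf_0 bind_return_pmf map_pmf_def bind_return_pmf')
next
  case (Suc m)
  then show ?case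
    using assms by (simp add: binomial_pmf_Suc bind_assoc_pmf bind_return_pmf map_pmf_def add.assoc)
qed

lemma prob_binomial_pmf_le_sub:
  fixes p \<gamma> \<epsilon> :: real and L n :: nat
  assumes p: "p \<in> {0..1}" and L: "0 < L" "L \<le> n" and \<gamma>: "0 \<le> \<gamma>" and \<epsilon>: "\<gamma> * n \<le> \<epsilon>"
  shows "measure_pmf.prob (binomial_pmf L p) {k. k \<le> L * p - \<epsilon>} \<le> exp (-2 * \<gamma>\<^sup>2 * n)"
proof -
  interpret binomial_distribution L p using p L by unfold_locales auto
  have "0 \<le> \<gamma> * n" using \<gamma> by simp
  then have "measure_pmf.prob (binomial_pmf L p) {k. k \<le> L * p - \<epsilon>} \<le> exp (-2 * \<epsilon>\<^sup>2 / L)"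
    using \<epsilon> L by (intro prob_le) auto
  also have "\<dots> \<le> exp (-2 * \<gamma>\<^sup>2 * n)"
  proof -
    have "\<gamma>\<^sup>2 * n * L \<le> \<gamma>\<^sup>2 * n * n" using L by (intro mult_left_mono) auto
    also have "\<dots> = (\<gamma> * n)\<^sup>2" by (simp add: power2_eq_square)
    also have "\<dots> \<le> \<epsilon>\<^sup>2" using \<epsilon> \<gamma> by (intro power_mono) auto
    finally show ?thesis using L by (simp add: field_simps)
  qed
  finally show ?thesis .
qed

lemma bin_entropy_nonneg:
  assumes "0 \<le> p" "p \<le> 1"
  shows "0 \<le> bin_entropy p"
proof (cases "p = 0 \<or> p = 1")
  case True
  then show ?thesis by (auto simp: bin_entropy_def)
next
  case False
  then have "p * log 2 p \<le> 0" "(1 - p) * log 2 (1 - p) \<le> 0"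
    using assms by (auto intro!: mult_nonneg_nonpos)
  then show ?thesis by (simp add: bin_entropy_def)
qed

lemma bin_entropy_half: "bin_entropy (1/2) = 1"
  by (simp add: bin_entropy_def log_divide)

lemma tendsto_bin_entropy_at_right:
  fixes p :: real
  assumes "0 \<le> p" "p < 1"
  shows "(bin_entropy \<longlongrightarrow> bin_entropy p) (at_right p)"
proof (cases "p = 0")
  case True
  have "(bin_entropy \<longlongrightarrow> 0) (at_right 0)"
    unfolding bin_entropy_def log_def by real_asymp
  then show ?thesis using True by (simp add: bin_entropy_def)
next
  case False
  then have "(bin_entropy \<longlongrightarrow> bin_entropy p) (at p)"
    using assms unfolding bin_entropy_def by (intro tendsto_intros) auto
  then show ?thesis by (rule tendsto_mono[OF at_le, rotated]) auto
qed

lemma exists_gt_bin_entropy_less: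
  fixes p c :: real
  assumes "0 \<le> p" "p < 1/2" "bin_entropy p < c"
  shows "\<exists>\<delta>. p < \<delta> \<and> \<delta> < 1/2 \<and> bin_entropy \<delta> < c"
proof -
  have "\<forall>\<^sub>F \<delta> in at_right p. bin_entropy \<delta> < c"
    using tendsto_bin_entropy_at_right[of p] assms by (intro order_tendstoD(2)) auto
  moreover have "\<forall>\<^sub>F \<delta> in at_right p. \<delta> < 1/2"
    unfolding eventually_at_right[OF \<open>p < 1/2\<close>] using assms by (intro exI[of _ "1/2"]) auto
  moreover have "\<forall>\<^sub>F \<delta> in at_right p. p < \<delta>" by (rule eventually_at_right_less)
  ultimately have "\<forall>\<^sub>F \<delta> in at_right p. p < \<delta> \<and> \<delta> < 1/2 \<and> bin_entropy \<delta> < c"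
    by eventually_elim auto
  then show ?thesis by (rule eventually_happens'[OF trivial_limit_at_right_real])
qed

lemma sum_choose_le_bin_entropy:
  fixes p :: real
  assumes p: "0 < p" "p \<le> 1/2" and k: "real k \<le> p * n"
  shows "real (\<Sum>j\<le>k. n choose j) \<le> 2 powr (n * bin_entropy p)"
proof -
  define q where "q = 1 - p"
  have q: "0 < q" "p \<le> q" using p by (auto simp: q_def)
  have "p * n \<le> n" using p by (simp add: mult_left_le_one_le)
  then have kn: "k \<le> n" using k by linarith
  have two_powr_log: "2 powr (x * log 2 c) = c powr x" if "0 < c" for x c :: real
  proof -
    have "2 powr (x * log 2 c) = (2 powr log 2 c) powr x" by (simp add: powr_powr mult.commute)
    then show ?thesis using that by simp
  qed
  have "2 powr (- (n * bin_entropy p)) = 2 powr ((p * n) * log 2 p + (q * n) * log 2 q)"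
    by (simp add: bin_entropy_def q_def algebra_simps)
  also have "\<dots> = p powr (p * n) * q powr (q * n)"
    using p q by (simp add: powr_add two_powr_log)
  also have "\<dots> = q powr n * (p / q) powr (p * n)"
    using p q by (simp add: powr_divide powr_diff q_def left_diff_distrib powr_add field_simps)
  finally have entropy: "2 powr (- (n * bin_entropy p)) = q powr n * (p / q) powr (p * n)" .
  have term_ge: "2 powr (- (n * bin_entropy p)) \<le> p ^ j * q ^ (n - j)" if "j \<le> k" for j
  proof -
    have "(p / q) powr (p * n) \<le> (p / q) powr j"
      using p q that k by (intro powr_mono') auto
    then have "q powr n * (p / q) powr (p * n) \<le> q powr n * (p / q) powr j"
      using q by (intro mult_left_mono) auto
    also have "\<dots> = p ^ j * q ^ (n - j)"
      using p q that kn by (simp add: powr_divide powr_realpow power_diff field_simps)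
    finally show ?thesis using entropy by simp
  qed
  have "real (\<Sum>j\<le>k. n choose j) * 2 powr (- (n * bin_entropy p))
      \<le> (\<Sum>j\<le>k. (n choose j) * (p ^ j * q ^ (n - j)))"
    unfolding of_nat_sum sum_distrib_right using term_ge by (intro sum_mono mult_left_mono) auto
  also have "\<dots> \<le> (\<Sum>j\<le>n. (n choose j) * (p ^ j * q ^ (n - j)))"
    using kn p q by (intro sum_mono2) auto
  also have "\<dots> = 1"
    using binomial_ring[of p q n] by (simp add: q_def mult.assoc)
  finally show ?thesis by (simp add: powr_minus field_simps)
qed

section \<open>Runs and the channel output\<close>

definition concat_runs :: "(bool \<times> nat) list \<Rightarrow> bool list" where
  "concat_runs rs = concat (map (\<lambda>(b, l). replicate l b) rs)"

lemma concat_runs_runs [simp]: "concat_runs (runs xs) = xs"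
  by (induction xs) (auto simp: concat_runs_def split: list.splits prod.splits)

lemma sum_list_runs: "sum_list (map snd (runs xs)) = length xs"
  by (induction xs) (auto split: list.splits prod.splits)

lemma run_output_le:
  assumes "d \<in> {0..1}" and "k \<in> set_pmf (if l < \<tau> then return_pmf l else binomial_pmf l (1 - d))"
  shows "k \<le> l"
  using assms by (auto simp: set_pmf_binomial_eq split: if_splits)

lemma finite_set_pmf_thr_runs: "d \<in> {0..1} \<Longrightarrow> finite (set_pmf (thr_runs \<tau> d rs))"
  by (induction \<tau> d rs rule: thr_runs.induct) (auto intro!: finite_set_pmf_binomial_pmf)

lemma subseq_replicate: "k \<le> l \<Longrightarrow> subseq (replicate k b) (replicate l b)"
  by (metis le_add_diff_inverse2 list_emb_append2 replicate_add subseq_order.order_refl)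

lemma subseq_thr_runs:
  assumes "d \<in> {0..1}" and "ys \<in> set_pmf (thr_runs \<tau> d rs)"
  shows "subseq ys (concat_runs rs)"
  using assms
proof (induction \<tau> d rs arbitrary: ys rule: thr_runs.induct)
  case 1
  then show ?case by (simp add: concat_runs_def)
next
  case (2 \<tau> d b l rs)
  then obtain k zs where k: "k \<in> set_pmf (if l < \<tau> then return_pmf l else binomial_pmf l (1 - d))"
    and zs: "zs \<in> set_pmf (thr_runs \<tau> d rs)" and ys: "ys = replicate k b @ zs"
    by auto
  have "subseq (replicate k b) (replicate l b)"
    using run_output_le[OF "2.prems"(1) k] by (rule subseq_replicate)
  then show ?case
    using "2.IH"[OF k "2.prems"(1) zs] by (simp add: ys concat_runs_def list_emb_append_mono)
qed

lemma subseq_bdc_thr: "d \<in> {0..1} \<Longrightarrow> ys \<in> set_pmf (bdc_thr \<tau> d x) \<Longrightarrow> subseq ys x"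
  using subseq_thr_runs[of d ys \<tau> "runs x"] by (simp add: bdc_thr_def)

lemma finite_set_pmf_bdc_thr: "d \<in> {0..1} \<Longrightarrow> finite (set_pmf (bdc_thr \<tau> d x))"
  by (simp add: bdc_thr_def finite_set_pmf_thr_runs)

definition long_part :: "nat \<Rightarrow> nat \<Rightarrow> nat" where
  "long_part \<tau> l = (if \<tau> \<le> l then l else 0)"

definition long_runs_length :: "nat \<Rightarrow> (bool \<times> nat) list \<Rightarrow> nat" where
  "long_runs_length \<tau> rs = sum_list (map (long_part \<tau> \<circ> snd) rs)"

definition short_runs_length :: "nat \<Rightarrow> (bool \<times> nat) list \<Rightarrow> nat" where
  "short_runs_length \<tau> rs = sum_list (map (\<lambda>(b, l). l - long_part \<tau> l) rs)"

lemma long_runs_length_simps [simp]: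
  "long_runs_length \<tau> [] = 0"
  "long_runs_length \<tau> ((b, l) # rs) = long_part \<tau> l + long_runs_length \<tau> rs"
  by (simp_all add: long_runs_length_def)

lemma long_add_short_runs_length:
  "long_runs_length \<tau> rs + short_runs_length \<tau> rs = sum_list (map snd rs)"
  by (induction rs) (auto simp: short_runs_length_def long_part_def)

lemma map_pmf_length_thr_runs:
  assumes "d \<in> {0..1}"
  shows "map_pmf length (thr_runs \<tau> d rs) =
    map_pmf (\<lambda>k. k + short_runs_length \<tau> rs) (binomial_pmf (long_runs_length \<tau> rs) (1 - d))"
proof (induction rs)
  case Nil
  have "1 - d \<in> {0..1}" using assms by simp
  then show ?case by (simp add: short_runs_length_def binomial_pmf_0)
next
  case (Cons r rs)
  obtain b l where r: "r = (b, l)" by force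
  define L S where "L = long_runs_length \<tau> rs" and "S = short_runs_length \<tau> rs"
  have "map_pmf length (thr_runs \<tau> d (r # rs)) =
     bind_pmf (if l < \<tau> then return_pmf l else binomial_pmf l (1 - d))
       (\<lambda>k. map_pmf ((+) k) (map_pmf length (thr_runs \<tau> d rs)))"
    by (simp add: r map_bind_pmf map_pmf_def bind_assoc_pmf bind_return_pmf)
  also have "\<dots> = bind_pmf (if l < \<tau> then return_pmf l else binomial_pmf l (1 - d))
       (\<lambda>k. map_pmf (\<lambda>j. k + j + S) (binomial_pmf L (1 - d)))"
    by (simp add: Cons L_def S_def pmf.map_comp o_def add.assoc)
  also have "\<dots> = map_pmf (\<lambda>k. k + short_runs_length \<tau> (r # rs))
      (binomial_pmf (long_runs_length \<tau> (r # rs)) (1 - d))"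
  proof (cases "l < \<tau>")
    case True
    then show ?thesis
      by (simp add: r L_def S_def short_runs_length_def long_part_def bind_return_pmf add_ac)
  next
    case False
    then show ?thesis
      using binomial_pmf_add[of "1 - d" l L] assms
      by (simp add: r L_def S_def short_runs_length_def long_part_def map_bind_pmf
          pmf.map_comp o_def add_ac)
  qed
  finally show ?case .
qed

lemma prob_thr_runs_short_output:
  fixes d \<gamma> \<delta> :: real and n :: nat
  assumes d: "d \<in> {0..1}" and \<gamma>: "0 < \<gamma>" and n: "sum_list (map snd rs) = n"
    and long: "d * long_runs_length \<tau> rs + \<gamma> * n \<le> \<delta> * n"
  shows "measure_pmf.prob (thr_runs \<tau> d rs) {y. length y < (1 - \<delta>) * n} \<le> exp (-2 * \<gamma>\<^sup>2 * n)"
proof -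
  define L S where "L = long_runs_length \<tau> rs" and "S = short_runs_length \<tau> rs"
  have LS: "L + S = n" using long_add_short_runs_length[of \<tau> rs] n by (simp add: L_def S_def)
  have "measure_pmf.prob (thr_runs \<tau> d rs) {y. length y < (1 - \<delta>) * n}
      = measure_pmf.prob (map_pmf length (thr_runs \<tau> d rs)) {k. k < (1 - \<delta>) * n}"
    by (simp add: measure_map_pmf vimage_def)
  also have "\<dots> = measure_pmf.prob (binomial_pmf L (1 - d)) {k. k + S < (1 - \<delta>) * n}"
    by (simp add: map_pmf_length_thr_runs[OF d] measure_map_pmf vimage_def L_def S_def)
  also have "\<dots> \<le> exp (-2 * \<gamma>\<^sup>2 * n)"
  proof (cases "L = 0")
    case True
    have "0 \<le> \<gamma> * n" using \<gamma> by simp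
    then have "(1 - \<delta>) * n \<le> S" using LS long True by (simp add: L_def algebra_simps)
    moreover have "binomial_pmf L (1 - d) = return_pmf 0" using True d by (simp add: binomial_pmf_0)
    ultimately show ?thesis by (simp add: measure_return)
  next
    case False
    have "{k. k + S < (1 - \<delta>) * n} \<subseteq> {k. k \<le> L * (1 - d) - (\<delta> * n - d * L)}"
      using LS by (auto simp: algebra_simps)
    then have "measure_pmf.prob (binomial_pmf L (1 - d)) {k. k + S < (1 - \<delta>) * n}
        \<le> measure_pmf.prob (binomial_pmf L (1 - d)) {k. k \<le> L * (1 - d) - (\<delta> * n - d * L)}"
      by (rule measure_pmf.finite_measure_mono) simp
    also have "\<dots> \<le> exp (-2 * \<gamma>\<^sup>2 * n)"
      using d False LS \<gamma> long by (intro prob_binomial_pmf_le_sub) (auto simp: L_def)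
    finally show ?thesis .
  qed
  finally show ?thesis .
qed

section \<open>Supersequences\<close>

definition words :: "nat \<Rightarrow> bool list set" where
  "words n = {x. length x = n}"

lemma finite_words [simp]: "finite (words n)"
  using finite_lists_length_eq[of "UNIV :: bool set" n] by (simp add: words_def)

lemma card_words: "card (words n) = 2 ^ n"
  using card_lists_length_eq[of "UNIV :: bool set" n] by (simp add: words_def)

lemma words_Suc: "words (Suc n) = (#) True ` words n \<union> (#) False ` words n"
  by (auto simp: words_def length_Suc_conv image_iff)

definition supersequences :: "nat \<Rightarrow> bool list \<Rightarrow> bool list set" where
  "supersequences n y = {x \<in> words n. subseq y x}"

lemma subseq_Cons_Cons_iff:
  "subseq (a # y) (c # x) \<longleftrightarrow> (if c = a then subseq y x else subseq (a # y) x)"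
  by (auto dest: subseq_Cons')

lemma supersequences_Suc_Cons:
  "supersequences (Suc n) (a # y) =
    (#) a ` supersequences n y \<union> (#) (\<not> a) ` supersequences n (a # y)"
proof (rule set_eqI)
  fix x
  show "x \<in> supersequences (Suc n) (a # y) \<longleftrightarrow>
    x \<in> (#) a ` supersequences n y \<union> (#) (\<not> a) ` supersequences n (a # y)"
  proof (cases x)
    case Nil
    then show ?thesis by (auto simp: supersequences_def words_def)
  next
    case (Cons c x')
    then show ?thesis
      by (cases "c = a") (auto simp: supersequences_def words_def subseq_Cons_Cons_iff)
  qed
qed

lemma card_supersequences_Suc_Cons:
  "card (supersequences (Suc n) (a # y)) =
    card (supersequences n y) + card (supersequences n (a # y))"
  unfolding supersequences_Suc_Cons
  by (subst card_Un_disjoint) (auto simp: supersequences_def card_image)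

lemma sum_choose_Suc:
  "(\<Sum>j\<le>Suc k. Suc n choose j) = (\<Sum>j\<le>Suc k. n choose j) + (\<Sum>j\<le>k. n choose j)"
  by (simp add: sum.atMost_Suc_shift sum.distrib del: sum.atMost_Suc)

lemma card_supersequences:
  "card (supersequences n y) = (if length y \<le> n then \<Sum>j\<le>n - length y. n choose j else 0)"
proof (induction n arbitrary: y)
  case 0
  then show ?case by (cases y) (auto simp: supersequences_def words_def)
next
  case (Suc n)
  show ?case
  proof (cases y)
    case Nil
    then show ?thesis
      using card_words[of "Suc n"] choose_row_sum[of "Suc n"]
      by (simp add: supersequences_def del: sum.atMost_Suc)
  next
    case (Cons a y')
    consider "length y' < n" | "length y' = n" | "length y' > n" by linarith
    then show ?thesis
    proof cases
      case 1
      then obtain k where "n - length y' = Suc k" "n - Suc (length y') = k"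
        by (metis Suc_diff_Suc diff_Suc_1)
      then show ?thesis
        using 1 sum_choose_Suc[where k = k and n = n]
        by (simp add: Cons card_supersequences_Suc_Cons Suc.IH del: sum.atMost_Suc)
    qed (simp_all add: Cons card_supersequences_Suc_Cons Suc.IH)
  qed
qed

lemma card_supersequences_le:
  fixes p :: real
  assumes "0 < p" "p \<le> 1/2" "(1 - p) * n \<le> length y"
  shows "real (card (supersequences n y)) \<le> 2 powr (n * bin_entropy p)"
proof (cases "length y \<le> n")
  case True
  then have "real (n - length y) \<le> p * n" using assms(3) by (simp add: algebra_simps)
  then show ?thesis
    using True sum_choose_le_bin_entropy[OF assms(1,2)] by (simp add: card_supersequences)
qed (simp add: card_supersequences)

section \<open>Long runs in a uniformly random word\<close>

text \<open>The limiting fraction of the bits of a uniformly random word that lie in runs of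
  length at least \<tau>.\<close>

definition long_run_density :: "nat \<Rightarrow> real" where
  "long_run_density \<tau> = (real \<tau> + 1) / 2 ^ \<tau>"

definition first_run_length :: "bool list \<Rightarrow> nat" where
  "first_run_length x = (case runs x of [] \<Rightarrow> 0 | (b, l) # _ \<Rightarrow> l)"

definition run_potential :: "nat \<Rightarrow> nat \<Rightarrow> real" where
  "run_potential \<tau> r = (if \<tau> \<le> r then real r + 1 else (real \<tau> + 1) * 2 ^ r / 2 ^ \<tau>)"

text \<open>The first run of x may still grow when bits are prepended, so the potential counts
  it by run_potential instead of by long_part. This is calibrated so that prepending a
  uniformly random bit raises the potential by exactly long_run_density \<tau> on average
  (potential_Cons), while the potential never falls below long_runs_length.\<close>

definition potential :: "nat \<Rightarrow> bool list \<Rightarrow> real" where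
  "potential \<tau> x = real (long_runs_length \<tau> (runs x)) - real (long_part \<tau> (first_run_length x))
     + run_potential \<tau> (first_run_length x)"

lemma run_potential_Suc: "run_potential \<tau> (Suc l) + long_part \<tau> l = 2 * run_potential \<tau> l"
  by (cases "\<tau> \<le> l"; cases "Suc l = \<tau>") (auto simp: run_potential_def long_part_def field_simps)

lemma run_potential_0: "run_potential \<tau> 0 = long_run_density \<tau>"
  by (simp add: run_potential_def long_run_density_def)

lemma run_potential_Suc_0: "run_potential \<tau> (Suc 0) = 2 * long_run_density \<tau>"
  using run_potential_Suc[of \<tau> 0] by (simp add: run_potential_0 long_part_def)

lemma potential_Cons:
  "potential \<tau> (True # x) + potential \<tau> (False # x) = 2 * potential \<tau> x + 2 * long_run_density \<tau>"
proof (cases "runs x")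
  case Nil
  then show ?thesis
    by (simp add: potential_def first_run_length_def long_part_def
        run_potential_0 run_potential_Suc_0)
next
  case (Cons r rs)
  obtain b l where r: "r = (b, l)" by force
  have "potential \<tau> (b # x) = real (long_runs_length \<tau> rs) + run_potential \<tau> (Suc l)"
    and "potential \<tau> ((\<not> b) # x) =
      real (long_part \<tau> l + long_runs_length \<tau> rs) + run_potential \<tau> (Suc 0)"
    and "potential \<tau> x = real (long_runs_length \<tau> rs) + run_potential \<tau> l"
    using Cons by (simp_all add: r potential_def first_run_length_def)
  then have "potential \<tau> (b # x) + potential \<tau> ((\<not> b) # x) =
      2 * potential \<tau> x + 2 * long_run_density \<tau>"
    using run_potential_Suc[of \<tau> l] by (simp add: run_potential_Suc_0)
  then show ?thesis by (cases b) auto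
qed

lemma sum_potential_words:
  "(\<Sum>x\<in>words n. potential \<tau> x) = (real n + 1) * long_run_density \<tau> * 2 ^ n"
proof (induction n)
  case 0
  have "words 0 = {[]}" by (auto simp: words_def)
  then show ?case by (simp add: potential_def first_run_length_def long_part_def run_potential_0)
next
  case (Suc n)
  have "(\<Sum>x\<in>words (Suc n). potential \<tau> x) =
      (\<Sum>x\<in>words n. potential \<tau> (True # x)) + (\<Sum>x\<in>words n. potential \<tau> (False # x))"
    unfolding words_Suc by (subst sum.union_disjoint) (auto simp: sum.reindex)
  also have "\<dots> = (\<Sum>x\<in>words n. 2 * potential \<tau> x + 2 * long_run_density \<tau>)"
    by (simp add: potential_Cons flip: sum.distrib)
  also have "\<dots> = (real (Suc n) + 1) * long_run_density \<tau> * 2 ^ Suc n"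
    by (simp add: sum.distrib Suc.IH card_words flip: sum_distrib_left) (simp add: algebra_simps)
  finally show ?case .
qed

lemma long_runs_length_le_potential: "real (long_runs_length \<tau> (runs x)) \<le> potential \<tau> x"
  by (simp add: potential_def long_part_def run_potential_def)

lemma sum_long_runs_length_words:
  "(\<Sum>x\<in>words n. real (long_runs_length \<tau> (runs x))) \<le> (real n + 1) * long_run_density \<tau> * 2 ^ n"
proof -
  have "(\<Sum>x\<in>words n. real (long_runs_length \<tau> (runs x))) \<le> (\<Sum>x\<in>words n. potential \<tau> x)"
    by (intro sum_mono long_runs_length_le_potential)
  then show ?thesis by (simp add: sum_potential_words)
qed

definition good_words :: "nat \<Rightarrow> real \<Rightarrow> nat \<Rightarrow> bool list set" where
  "good_words \<tau> \<theta> n = {x \<in> words n. real (long_runs_length \<tau> (runs x)) \<le> \<theta> * n}"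

lemma card_good_words_ge:
  fixes \<theta> :: real and n :: nat
  assumes "0 < \<theta>" and "0 < n"
  shows "(1 - (real n + 1) * long_run_density \<tau> / (\<theta> * n)) * 2 ^ n \<le> card (good_words \<tau> \<theta> n)"
proof -
  define bad where "bad = {x \<in> words n. \<theta> * n < real (long_runs_length \<tau> (runs x))}"
  have "real (card bad) * (\<theta> * n) \<le> (real n + 1) * long_run_density \<tau> * 2 ^ n"
    unfolding bad_def
    using card_gt_mult_le_sum[of "words n" "\<lambda>x. real (long_runs_length \<tau> (runs x))" "\<theta> * n"]
      sum_long_runs_length_words[where n = n and \<tau> = \<tau>]
    by simp
  then have bad: "real (card bad) \<le> (real n + 1) * long_run_density \<tau> / (\<theta> * n) * 2 ^ n"
    using assms by (simp add: field_simps)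
  have "card (good_words \<tau> \<theta> n) + card bad = 2 ^ n"
    unfolding good_words_def bad_def card_words[of n, symmetric]
    by (subst card_Un_disjoint[symmetric]) (auto intro: arg_cong[where f = card])
  then have "real (card (good_words \<tau> \<theta> n)) = 2 ^ n - real (card bad)"
    by (metis add_diff_cancel_right' of_nat_add of_nat_numeral of_nat_power)
  then show ?thesis using bad by (simp add: left_diff_distrib)
qed

lemma eventually_card_good_words_ge:
  fixes \<theta> :: real
  assumes "long_run_density \<tau> < \<theta>"
  shows "\<exists>c > 0. \<forall>\<^sub>F n in sequentially. c * 2 ^ n \<le> real (card (good_words \<tau> \<theta> n))"
proof -
  define q where "q = long_run_density \<tau>"
  have q: "0 < q" by (simp add: q_def long_run_density_def)
  have \<theta>: "0 < \<theta>" using q assms by (simp add: q_def)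
  define c where "c = (1 - q / \<theta>) / 2"
  have "q / \<theta> < 1" using assms \<theta> by (simp add: q_def)
  then have c: "0 < c" by (simp add: c_def)
  have "(\<lambda>n. q / \<theta> / real n) \<longlonglongrightarrow> 0" by (rule lim_const_over_n)
  then have "\<forall>\<^sub>F n in sequentially. q / \<theta> / real n < c" using c by (rule order_tendstoD)
  then have "\<forall>\<^sub>F n in sequentially. c * 2 ^ n \<le> card (good_words \<tau> \<theta> n)"
    using eventually_gt_at_top[of 0]
  proof eventually_elim
    case (elim n)
    have "1 - (real n + 1) * q / (\<theta> * n) = 2 * c - q / \<theta> / n"
      using elim \<theta> by (simp add: c_def field_simps)
    then have "c \<le> 1 - (real n + 1) * q / (\<theta> * n)" using elim(1) by linarith
    then have "c * 2 ^ n \<le> (1 - (real n + 1) * q / (\<theta> * n)) * 2 ^ n"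
      by (intro mult_right_mono) auto
    also have "\<dots> \<le> card (good_words \<tau> \<theta> n)"
      using card_good_words_ge[OF \<theta> elim(2)] by (simp add: q_def)
    finally show ?case .
  qed
  then show ?thesis using c by blast
qed

section \<open>Codes\<close>

definition confusion :: "nat \<Rightarrow> real \<Rightarrow> real \<Rightarrow> nat \<Rightarrow> bool list \<Rightarrow> bool list \<Rightarrow> real" where
  "confusion \<tau> d \<delta> n a b =
     measure_pmf.prob (bdc_thr \<tau> d a) {y. (1 - \<delta>) * n \<le> length y \<and> subseq y b}"

text \<open>The LEAST ranges over all indices: an output of enc i is a subsequence of enc i, so
  the decoded index is then at most i and no bound on the code size is needed.\<close>

definition subseq_decoder :: "(nat \<Rightarrow> bool list) \<Rightarrow> bool list \<Rightarrow> nat" where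
  "subseq_decoder enc y = (LEAST j. subseq y (enc j))"

lemma sum_confusion_words_le:
  assumes d: "d \<in> {0..1}" and \<delta>: "0 < \<delta>" "\<delta> \<le> 1/2"
  shows "(\<Sum>b\<in>words n. confusion \<tau> d \<delta> n a b) \<le> 2 powr (n * bin_entropy \<delta>)"
proof -
  define P Y where "P = bdc_thr \<tau> d a" and "Y = set_pmf P"
  define long where "long y \<longleftrightarrow> (1 - \<delta>) * n \<le> length y" for y :: "bool list"
  have Y: "finite Y" using finite_set_pmf_bdc_thr[OF d] by (simp add: Y_def P_def)
  have "confusion \<tau> d \<delta> n a b = (\<Sum>y\<in>Y. pmf P y * of_bool (long y \<and> subseq y b))" for b
  proof -
    have "confusion \<tau> d \<delta> n a b = measure_pmf.prob P ({y. long y \<and> subseq y b} \<inter> Y)"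
      by (simp add: confusion_def long_def P_def Y_def measure_Int_set_pmf)
    also have "\<dots> = (\<Sum>y\<in>{y \<in> Y. long y \<and> subseq y b}. pmf P y)"
      using Y by (simp add: measure_measure_pmf_finite Int_def conj_commute)
    finally show ?thesis
      using Y by (simp add: sum.inter_filter of_bool_def if_distrib cong: if_cong)
  qed
  then have "(\<Sum>b\<in>words n. confusion \<tau> d \<delta> n a b) =
      (\<Sum>y\<in>Y. pmf P y * (\<Sum>b\<in>words n. of_bool (long y \<and> subseq y b)))"
    by (simp add: sum_distrib_left sum.swap[of _ Y] mult.commute)
  also have "\<dots> \<le> (\<Sum>y\<in>Y. pmf P y * 2 powr (n * bin_entropy \<delta>))"
  proof (intro sum_mono mult_left_mono)
    fix y
    have "(\<Sum>b\<in>words n. of_bool (long y \<and> subseq y b) :: real) =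
        (if long y then real (card (supersequences n y)) else 0)"
      by (simp add: supersequences_def of_bool_def sum.If_cases Int_def conj_commute)
    then show "(\<Sum>b\<in>words n. of_bool (long y \<and> subseq y b)) \<le> 2 powr (n * bin_entropy \<delta>)"
      using card_supersequences_le[OF \<delta>] by (simp add: long_def)
  qed simp
  also have "\<dots> = 2 powr (n * bin_entropy \<delta>)"
    using Y by (simp add: Y_def sum_pmf_eq_1 flip: sum_distrib_right)
  finally show ?thesis .
qed

lemma dec_error_subseq_decoder_le:
  fixes \<delta> :: real and n :: nat
  assumes d: "d \<in> {0..1}" and i: "i < M"
  shows "dec_error (bdc_thr \<tau> d) enc (subseq_decoder enc) i \<le>
    measure_pmf.prob (bdc_thr \<tau> d (enc i)) {y. length y < (1 - \<delta>) * n} +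
    (\<Sum>j\<in>{..<M} - {i}. confusion \<tau> d \<delta> n (enc i) (enc j))"
proof -
  define P where "P = bdc_thr \<tau> d (enc i)"
  define E where "E j = {y. (1 - \<delta>) * n \<le> length y \<and> subseq y (enc j)}" for j
  have "{y. subseq_decoder enc y \<noteq> i} \<inter> set_pmf P \<subseteq>
      {y. length y < (1 - \<delta>) * n} \<union> (\<Union>j\<in>{..<M} - {i}. E j)"
  proof
    fix y assume y: "y \<in> {y. subseq_decoder enc y \<noteq> i} \<inter> set_pmf P"
    define j where "j = subseq_decoder enc y"
    have "subseq y (enc i)" using y subseq_bdc_thr[OF d] by (auto simp: P_def)
    then have "subseq y (enc j)" and "j \<le> i"
      unfolding j_def subseq_decoder_def by (auto intro: LeastI Least_le)
    then show "y \<in> {y. length y < (1 - \<delta>) * n} \<union> (\<Union>j\<in>{..<M} - {i}. E j)"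
      using y i by (force simp: E_def j_def)
  qed
  then have "dec_error (bdc_thr \<tau> d) enc (subseq_decoder enc) i \<le>
      measure_pmf.prob P ({y. length y < (1 - \<delta>) * n} \<union> (\<Union>j\<in>{..<M} - {i}. E j))"
    unfolding dec_error_def P_def
    by (subst measure_Int_set_pmf[symmetric]) (rule measure_pmf.finite_measure_mono, auto)
  also have "\<dots> \<le> measure_pmf.prob P {y. length y < (1 - \<delta>) * n} +
      measure_pmf.prob P (\<Union>j\<in>{..<M} - {i}. E j)"
    by (rule measure_Un_le) auto
  also have "measure_pmf.prob P (\<Union>j\<in>{..<M} - {i}. E j) \<le>
      (\<Sum>j\<in>{..<M} - {i}. measure_pmf.prob P (E j))"
    by (rule measure_pmf.finite_measure_subadditive_finite) auto
  finally show ?thesis by (simp add: P_def E_def confusion_def)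
qed

lemma prob_bdc_thr_short_output:
  fixes d \<gamma> \<delta> \<theta> :: real
  assumes d: "d \<in> {0..1}" and \<gamma>: "0 < \<gamma>" and x: "x \<in> good_words \<tau> \<theta> n"
    and \<delta>: "d * \<theta> + \<gamma> \<le> \<delta>"
  shows "measure_pmf.prob (bdc_thr \<tau> d x) {y. length y < (1 - \<delta>) * n} \<le> exp (-2 * \<gamma>\<^sup>2 * n)"
  unfolding bdc_thr_def
proof (rule prob_thr_runs_short_output[OF d \<gamma>])
  show "sum_list (map snd (runs x)) = n"
    using x by (simp add: sum_list_runs good_words_def words_def)
  have "d * long_runs_length \<tau> (runs x) \<le> d * (\<theta> * n)"
    using x d by (intro mult_left_mono) (auto simp: good_words_def)
  also have "\<dots> + \<gamma> * n \<le> \<delta> * n"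
    using \<delta> by (metis distrib_right mult.assoc mult_right_mono of_nat_0_le_iff)
  finally show "d * long_runs_length \<tau> (runs x) + \<gamma> * n \<le> \<delta> * n" by simp
qed

lemma exists_code:
  fixes d \<delta> \<gamma> \<theta> :: real and \<tau> n K :: nat
  assumes d: "d \<in> {0..1}" and \<delta>: "0 < \<delta>" "\<delta> \<le> 1/2" and \<gamma>: "0 < \<gamma>"
    and \<theta>: "d * \<theta> + \<gamma> \<le> \<delta>" and K: "8 * K \<le> card (good_words \<tau> \<theta> n)"
  shows "\<exists>enc. (\<forall>i<K. length (enc i) = n) \<and>
    (\<forall>i<K. dec_error (bdc_thr \<tau> d) enc (subseq_decoder enc) i \<le>
       exp (-2 * \<gamma>\<^sup>2 * n) + 64 * real K * 2 powr (n * bin_entropy \<delta>) / card (good_words \<tau> \<theta> n))"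
proof -
  define T S w where "T = good_words \<tau> \<theta> n" and "S = 2 powr (n * bin_entropy \<delta>)"
    and "w = confusion \<tau> d \<delta> n"
  have w: "0 \<le> w a b" for a b by (simp add: w_def confusion_def)
  have T: "finite T" "T \<subseteq> words n" by (auto simp: T_def good_words_def)
  have row: "(\<Sum>b\<in>T. w a b) \<le> S" for a
  proof -
    have "(\<Sum>b\<in>T. w a b) \<le> (\<Sum>b\<in>words n. w a b)" using T w by (intro sum_mono2) auto
    also have "\<dots> \<le> S" unfolding w_def S_def by (rule sum_confusion_words_le[OF d \<delta>])
    finally show ?thesis .
  qed
  have "\<exists>C\<subseteq>T. card C = K \<and> (\<forall>a\<in>C. (\<Sum>b\<in>C - {a}. w a b) \<le> 64 * real K * S / card T)"
    by (intro exists_subset_small_row_sums T(1) w row) (simp_all add: S_def T_def K)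
  then obtain C where C: "C \<subseteq> T" "card C = K"
    and sparse: "\<forall>a\<in>C. (\<Sum>b\<in>C - {a}. w a b) \<le> 64 * real K * S / card T"
    by blast
  have "finite C" using C(1) T(1) finite_subset by blast
  then obtain enc where enc: "bij_betw enc {..<K} C"
    using ex_bij_betw_nat_finite C(2) by (fastforce simp: atLeast0LessThan)
  show ?thesis
  proof (intro exI[of _ enc] conjI allI impI)
    fix i assume i: "i < K"
    have enc_i: "enc i \<in> good_words \<tau> \<theta> n"
      using enc i C by (auto simp: T_def bij_betw_def)
    then show "length (enc i) = n" by (simp add: good_words_def words_def)
    have "(\<Sum>j\<in>{..<K} - {i}. w (enc i) (enc j)) = (\<Sum>b\<in>C - {enc i}. w (enc i) b)"
    proof (rule sum.reindex_bij_betw)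
      show "bij_betw enc ({..<K} - {i}) (C - {enc i})"
        using enc i by (intro bij_betw_DiffI) (auto simp: bij_betw_def)
    qed
    also have "\<dots> \<le> 64 * real K * S / card T"
      using sparse bij_betw_apply[OF enc] i by blast
    finally show "dec_error (bdc_thr \<tau> d) enc (subseq_decoder enc) i \<le>
       exp (-2 * \<gamma>\<^sup>2 * n) + 64 * real K * 2 powr (n * bin_entropy \<delta>) / card (good_words \<tau> \<theta> n)"
      using dec_error_subseq_decoder_le[OF d i, of \<tau> enc \<delta> n]
        prob_bdc_thr_short_output[OF d \<gamma> enc_i \<theta>]
      unfolding w_def S_def T_def by linarith
  qed
qed

lemma exists_code_of_rate:
  fixes d \<delta> \<gamma> \<theta> R c :: real and \<tau> n :: nat
  assumes d: "d \<in> {0..1}" and \<delta>: "0 < \<delta>" "\<delta> \<le> 1/2" and \<gamma>: "0 < \<gamma>"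
    and \<theta>: "d * \<theta> + \<gamma> \<le> \<delta>" and R: "0 \<le> R"
    and c: "0 < c" "16 * 2 powr ((R - 1) * n) \<le> c" and T: "c * 2 ^ n \<le> card (good_words \<tau> \<theta> n)"
  shows "\<exists>M enc dec. 2 powr (R * n) \<le> real M \<and> (\<forall>i<M. length (enc i) = n) \<and>
    (\<forall>i<M. dec_error (bdc_thr \<tau> d) enc dec i \<le>
       exp (-2 * \<gamma>\<^sup>2 * n) + 128 / c * 2 powr ((R + bin_entropy \<delta> - 1) * n))"
proof -
  define K h where "K = nat \<lceil>2 powr (R * n)\<rceil>" and "h = bin_entropy \<delta>"
  have "1 \<le> 2 powr (R * n)" using R by (simp add: ge_one_powr_ge_zero)
  moreover have "real K = \<lceil>2 powr (R * n)\<rceil>" by (simp add: K_def)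
  ultimately have K: "2 powr (R * n) \<le> K" "K \<le> 2 * 2 powr (R * n)"
    using le_of_int_ceiling of_int_ceiling_le_add_one[of "2 powr (R * n)"] by linarith+
  have "real (8 * K) \<le> 16 * 2 powr ((R - 1) * n) * 2 ^ n"
    using K by (simp add: left_diff_distrib powr_diff powr_realpow)
  also have "\<dots> \<le> c * 2 ^ n" using c by (intro mult_right_mono) auto
  also have "\<dots> \<le> card (good_words \<tau> \<theta> n)" by (rule T)
  finally obtain enc where enc: "\<forall>i<K. length (enc i) = n"
    "\<forall>i<K. dec_error (bdc_thr \<tau> d) enc (subseq_decoder enc) i \<le>
      exp (-2 * \<gamma>\<^sup>2 * n) + 64 * real K * 2 powr (n * h) / card (good_words \<tau> \<theta> n)"
    using exists_code[OF d \<delta> \<gamma> \<theta>] unfolding h_def by (metis of_nat_le_iff)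
  have "64 * real K * 2 powr (n * h) / card (good_words \<tau> \<theta> n) \<le>
      64 * (2 * 2 powr (R * n)) * 2 powr (n * h) / (c * 2 ^ n)"
    using K T c by (intro frac_le mult_right_mono mult_left_mono) auto
  also have "\<dots> = 128 / c * 2 powr ((R + h - 1) * n)"
    using c by (simp add: powr_add powr_diff powr_realpow algebra_simps)
  finally show ?thesis
    using K enc by (intro exI[of _ K] exI[of _ enc] exI[of _ "subseq_decoder enc"])
      (auto simp: h_def)
qed

section \<open>Achievable rates\<close>

lemma LIMSEQ_exp_mult_neg:
  fixes a :: real
  assumes "a < 0"
  shows "(\<lambda>n. exp (a * n)) \<longlonglongrightarrow> 0"
proof -
  have "(\<lambda>n. exp a ^ n) \<longlonglongrightarrow> 0" using assms by (intro LIMSEQ_power_zero) auto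
  then show ?thesis by (simp add: exp_of_nat_mult[symmetric] mult.commute)
qed

lemma LIMSEQ_two_powr_mult_neg:
  fixes a :: real
  assumes "a < 0"
  shows "(\<lambda>n. 2 powr (a * n)) \<longlonglongrightarrow> 0"
  using LIMSEQ_exp_mult_neg[of "a * ln 2"] assms by (simp add: powr_def mult_neg_pos mult_ac)

lemma achievable_if_eventually_codes:
  fixes W :: "bool list \<Rightarrow> bool list pmf" and R :: real and \<beta> :: "nat \<Rightarrow> real"
  assumes \<beta>: "\<beta> \<longlonglongrightarrow> 0"
    and codes: "\<forall>\<^sub>F n in sequentially. \<exists>M enc dec. 2 powr (R * n) \<le> real M \<and>
      (\<forall>i<M. length (enc i) = n) \<and> (\<forall>i<M. dec_error W enc dec i \<le> \<beta> n)"
  shows "achievable W R"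
proof -
  define good where "good n \<longleftrightarrow> (\<exists>M enc dec. 2 powr (R * n) \<le> real M \<and>
      (\<forall>i<M. length (enc i) = n) \<and> (\<forall>i<M. dec_error W enc dec i \<le> \<beta> n))" for n
  \<comment> \<open>for the finitely many other n the empty code (M = 0) meets any error bound\<close>
  define \<epsilon> where "\<epsilon> n = (if good n then \<beta> n else 0)" for n
  have "\<exists>M enc dec. (good n \<longrightarrow> 2 powr (R * n) \<le> real M) \<and>
      (\<forall>i<M. length (enc i) = n) \<and> (\<forall>i<M. dec_error W enc dec i \<le> \<epsilon> n)" for n
  proof (cases "good n")
    case True
    then obtain M enc dec where "2 powr (R * n) \<le> real M" "\<forall>i<M. length (enc i) = n"
      "\<forall>i<M. dec_error W enc dec i \<le> \<beta> n"
      unfolding good_def by blast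
    then show ?thesis
      using True by (intro exI[of _ M] exI[of _ enc] exI[of _ dec]) (simp add: \<epsilon>_def)
  qed (intro exI[of _ 0], simp)
  then obtain M enc dec where code: "\<And>n. (good n \<longrightarrow> 2 powr (R * n) \<le> real (M n)) \<and>
      (\<forall>i<M n. length (enc n i) = n) \<and> (\<forall>i<M n. dec_error W (enc n) (dec n) i \<le> \<epsilon> n)"
    by metis
  have "\<forall>\<^sub>F n in sequentially. good n" using codes by (simp add: good_def)
  moreover from this have "\<forall>\<^sub>F n in sequentially. \<beta> n = \<epsilon> n"
    by eventually_elim (simp add: \<epsilon>_def)
  then have "\<epsilon> \<longlonglongrightarrow> 0" by (rule Lim_transform_eventually[OF \<beta>])
  ultimately show ?thesis
    unfolding achievable_def using code by (blast intro: eventually_mono)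
qed

lemma achievable_nonpos:
  fixes R :: real
  assumes "R \<le> 0"
  shows "achievable W R"
proof (rule achievable_if_eventually_codes[where \<beta> = "\<lambda>_. 0"])
  show "\<forall>\<^sub>F n in sequentially. \<exists>M enc dec. 2 powr (R * n) \<le> real M \<and>
      (\<forall>i<M. length (enc i) = n) \<and> (\<forall>i<M. dec_error W enc dec i \<le> 0)"
  proof (intro always_eventually allI)
    fix n :: nat
    have "2 powr (R * n) \<le> 2 powr 0"
      using assms by (intro powr_mono) (auto simp: mult_nonpos_nonneg)
    then show "\<exists>M enc dec. 2 powr (R * n) \<le> real M \<and>
      (\<forall>i<M. length (enc i) = n) \<and> (\<forall>i<M. dec_error W enc dec i \<le> 0)"
      by (intro exI[of _ 1] exI[of _ "\<lambda>_. replicate n False"] exI[of _ "\<lambda>_. 0"])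
        (simp add: dec_error_def)
  qed
qed simp

lemma capacity_geI:
  assumes "\<And>r. r < x \<Longrightarrow> \<exists>R\<ge>r. achievable W R"
  shows "ereal x \<le> capacity W"
proof (rule dense_le)
  fix y assume y: "y < ereal x"
  show "y \<le> capacity W"
  proof (cases y)
    case (real r)
    then obtain R where "r \<le> R" "achievable W R" using assms y by auto
    then have "ereal R \<le> capacity W" unfolding capacity_def by (intro Sup_upper) auto
    then show ?thesis using \<open>r \<le> R\<close> real by (meson ereal_less_eq(3) order_trans)
  qed (use y in auto)
qed

lemma achievable_bdc_thr:
  fixes d \<delta> R :: real
  assumes d: "d \<in> {0..1}" and \<delta>: "0 < \<delta>" "\<delta> \<le> 1/2" and p: "d * long_run_density \<tau> < \<delta>"
    and R: "0 \<le> R" "R < 1 - bin_entropy \<delta>"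
  shows "achievable (bdc_thr \<tau> d) R"
proof -
  define q \<gamma> where "q = long_run_density \<tau>" and "\<gamma> = (\<delta> - d * q) / 2"
  define \<theta> h where "\<theta> = q + \<gamma>" and "h = bin_entropy \<delta>"
  have \<gamma>: "0 < \<gamma>" using p by (simp add: \<gamma>_def q_def)
  have "d * \<gamma> \<le> \<gamma>" using d \<gamma> by (simp add: mult_left_le_one_le)
  moreover have "d * \<theta> + \<gamma> = d * q + d * \<gamma> + \<gamma>" "\<delta> = d * q + 2 * \<gamma>"
    by (simp_all add: \<theta>_def \<gamma>_def field_simps)
  ultimately have \<theta>: "d * \<theta> + \<gamma> \<le> \<delta>" by linarith
  obtain c :: real where c: "0 < c"
    and card_T: "\<forall>\<^sub>F n in sequentially. c * 2 ^ n \<le> real (card (good_words \<tau> \<theta> n))"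
    using eventually_card_good_words_ge[of \<tau> \<theta>] \<gamma> by (auto simp: \<theta>_def q_def)
  have "0 \<le> h" using \<delta> by (simp add: h_def bin_entropy_nonneg)
  then have "(\<lambda>n. 16 * 2 powr ((R - 1) * n)) \<longlonglongrightarrow> 0"
    using R unfolding h_def by (intro tendsto_mult_right_zero LIMSEQ_two_powr_mult_neg) simp
  from order_tendstoD(2)[OF this c]
  have small: "\<forall>\<^sub>F n in sequentially. 16 * 2 powr ((R - 1) * n) \<le> c"
    by (rule eventually_mono) simp
  define \<beta> where "\<beta> n = exp (-2 * \<gamma>\<^sup>2 * n) + 128 / c * 2 powr ((R + h - 1) * n)" for n :: nat
  show ?thesis
  proof (rule achievable_if_eventually_codes[where \<beta> = \<beta>])
    have "(\<lambda>n. exp (-2 * \<gamma>\<^sup>2 * n)) \<longlonglongrightarrow> 0" using \<gamma> by (intro LIMSEQ_exp_mult_neg) simp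
    moreover have "(\<lambda>n. 2 powr ((R + h - 1) * n)) \<longlonglongrightarrow> 0"
      using R by (intro LIMSEQ_two_powr_mult_neg) (simp add: h_def)
    ultimately show "\<beta> \<longlonglongrightarrow> 0"
      unfolding \<beta>_def by (intro tendsto_add_zero tendsto_mult_right_zero)
    show "\<forall>\<^sub>F n in sequentially. \<exists>M enc dec. 2 powr (R * n) \<le> real M \<and>
      (\<forall>i<M. length (enc i) = n) \<and> (\<forall>i<M. dec_error (bdc_thr \<tau> d) enc dec i \<le> \<beta> n)"
      using card_T small
      by eventually_elim (use exists_code_of_rate[OF d \<delta> \<gamma> \<theta> R(1) c] in \<open>simp add: \<beta>_def h_def\<close>)
  qed
qed

theorem theorem7p2:
  fixes d :: real and \<tau> :: nat
  assumes "0 \<le> d" and "d \<le> 1"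
    and "d * (real \<tau> + 1) / 2 ^ \<tau> \<le> 1 / 2"
  shows "capacity (bdc_thr \<tau> d) \<ge> ereal (1 - bin_entropy (d * (real \<tau> + 1) / 2 ^ \<tau>))"
proof (rule capacity_geI)
  define p where "p = d * long_run_density \<tau>"
  have p: "0 \<le> p" "p \<le> 1/2" and d: "d \<in> {0..1}"
    using assms by (simp_all add: p_def long_run_density_def)
  fix r assume r: "r < 1 - bin_entropy (d * (real \<tau> + 1) / 2 ^ \<tau>)"
  then have r: "r < 1 - bin_entropy p" by (simp add: p_def long_run_density_def)
  show "\<exists>R\<ge>r. achievable (bdc_thr \<tau> d) R"
  proof (cases "r \<le> 0")
    case True
    then show ?thesis using achievable_nonpos[of r] by blast
  next
    case False
    with r bin_entropy_half have "p \<noteq> 1/2" by force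
    then obtain \<delta> where "p < \<delta>" "\<delta> < 1/2" "bin_entropy \<delta> < 1 - r"
      using exists_gt_bin_entropy_less[of p "1 - r"] p r by force
    then have "achievable (bdc_thr \<tau> d) r"
      using p False by (intro achievable_bdc_thr[OF d]) (auto simp: p_def)
    then show ?thesis by blast
  qed
qed

end
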